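(* Let $\eta>0$ and consider the network (NonAut-II-$\eta$) with species $\Lambda_1,\mathrm{I}_1,\Lambda_2,\mathrm{I}_2$ and reactions \[ 1:\ \eta\Lambda_1+\Lambda_2\to\eta\Lambda_1+\mathrm{I}_2,\quad 2:\ \mathrm{I}_2\to\Lambda_2,\quad 3:\ \eta\Lambda_2+\Lambda_1\to\eta\Lambda_2+\mathrm{I}_1,\quad 4:\ \mathrm{I}_1\to\Lambda_1, \] with the associated ODEs \[ \begin{cases} [\dot\Lambda_1]=-r_3([\Lambda_2],[\Lambda_1])+r_4([\mathrm{I}_1]),\\ [\dot{\mathrm I}_1]=r_3([\Lambda_2],[\Lambda_1])-r_4([\mathrm{I}_1]),\\ [\dot\Lambda_2]=-r_1([\Lambda_1],[\Lambda_2])+r_2([\mathrm{I}_2]),\\ [\dot{\mathrm I}_2]=r_1([\Lambda_1],[\Lambda_2])-r_2([\mathrm{I}_2]), \end{cases} \] where all rates are monotone chemical functions, under the kinetic symmetry constraints $r_1\equiv r_3\equiv r_o$ and $r_2\equiv r_4\equiv r_e$ (as functions of their ordered arguments). Let $\partial_1 r_o,\partial_2 r_o$ denote the derivatives of $r_o$ with respect to its first and second arguments and $\partial_I r_e$ the derivative of $r_e$, evaluated at a homogeneous steady state. Then the system has the capacity for zero-eigenvalue bifurcation and consequently differentiation, with bifurcation condition \[ \partial_2 r_o+\partial_I r_e=\partial_1 r_o, \] and the existence of an unstable (homogeneous) steady state requires $\partial_2 r_o+\partial_I r_e<\partial_1 r_o$. The unique associated instability motif, represented by a non-autocatalytic unstable-positive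 feedback, which generates the necessary instability is the subnetwork with species $\{\Lambda_1,\Lambda_2\}$ and reactions $\{1:\ \eta\Lambda_1+\Lambda_2\to\eta\Lambda_1+\dots,\ 3:\ \eta\Lambda_2+\Lambda_1\to\eta\Lambda_2+\dots\}$.
   Context: A rate function is monotone chemical if it is nonnegative, positive exactly when all its reactant concentrations are positive, independent of non-reactant concentrations, and has positive partial derivative in each reactant concentration at positive concentrations; kinetics are parameter-rich, so partial derivatives at a positive steady state can be prescribed as arbitrary positive numbers. The system has the conservation laws $[\Lambda_1]+[\mathrm I_1]$ and $[\Lambda_2]+[\mathrm I_2]$; capacity for zero-eigenvalue bifurcation means there exist admissible derivative values at a homogeneous positive steady state ($[\Lambda_1]=[\Lambda_2]$, $[\mathrm I_1]=[\mathrm I_2]$) for which the Jacobian restricted to the invariant set fixing these conserved quantities is singular. For a network with stoichiometric matrix $S_{mj}$ (net production of species $m$ in reaction $j$), a $k$-Child-Selection triple consists of $k$ species $\kappa$, $k$ reactions $E_\kappa$ and a bijection $J:\kappa\to E_\kappa$ such that each species in $\kappa$ is a reactant of its assigned reaction; its CS-matrix is $S[\kappa]_{ml}=S_{m,J(X_l)}$. An unstable-positive feedback is a $k\times k$ CS-matrix with $\operatorname{sign}\det=(-1)^{k-1}$ and no proper principal $k'\times k'$ submatrix with determinant of sign $(-1)^{k'-1}$; it is non-autocatalytic if it is not Metzler (some off-diagonal entry negative). Its instability motif is the subnetwork consisting of species $\kappa$ and reactions $E_\kappa$, disregarding other species. *)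

theory Defs
  imports Complex_Main "HOL-Combinatorics.Permutations"
begin

datatype species = L1 | I1 | L2 | I2
datatype reaction = R1 | R2 | R3 | R4

lemma species_UNIV: "(UNIV :: species set) = {L1, I1, L2, I2}"
  using species.exhaust by auto
lemma reaction_UNIV: "(UNIV :: reaction set) = {R1, R2, R3, R4}"
  using reaction.exhaust by auto

instance species :: finite
  by standard (simp add: species_UNIV)
instance reaction :: finite
  by standard (simp add: reaction_UNIV)

fun inp :: "real \<Rightarrow> reaction \<Rightarrow> species \<Rightarrow> real" where
  "inp eta R1 m = (if m = L1 then eta else if m = L2 then 1 else 0)"
| "inp eta R2 m = (if m = I2 then 1 else 0)"
| "inp eta R3 m = (if m = L2 then eta else if m = L1 then 1 else 0)"
| "inp eta R4 m = (if m = I1 then 1 else 0)"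

fun outp :: "real \<Rightarrow> reaction \<Rightarrow> species \<Rightarrow> real" where
  "outp eta R1 m = (if m = L1 then eta else if m = I2 then 1 else 0)"
| "outp eta R2 m = (if m = L2 then 1 else 0)"
| "outp eta R3 m = (if m = L2 then eta else if m = I1 then 1 else 0)"
| "outp eta R4 m = (if m = L1 then 1 else 0)"

definition stoich :: "real \<Rightarrow> species \<Rightarrow> reaction \<Rightarrow> real" where
  "stoich eta m j = outp eta j m - inp eta j m"

definition reactant :: "real \<Rightarrow> species \<Rightarrow> reaction \<Rightarrow> bool" where
  "reactant eta m j \<longleftrightarrow> inp eta j m > 0"

text \<open>dr j n is the partial derivative of rate r_j with respect to [n] at a positive
  (homogeneous) steady state. Monotone chemical kinetics: positive for reactants,
  zero for non-reactants; parameter-richness: otherwise arbitrary. Symmetry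
  r_1 = r_3 = r_o, r_2 = r_4 = r_e (ordered arguments r_1([L1],[L2]), r_3([L2],[L1]))
  evaluated at a homogeneous state gives the equalities below.\<close>
definition admissible :: "real \<Rightarrow> (reaction \<Rightarrow> species \<Rightarrow> real) \<Rightarrow> bool" where
  "admissible eta dr \<longleftrightarrow>
     (\<forall>j m. (reactant eta m j \<longrightarrow> dr j m > 0) \<and> (\<not> reactant eta m j \<longrightarrow> dr j m = 0))
     \<and> dr R1 L1 = dr R3 L2 \<and> dr R1 L2 = dr R3 L1 \<and> dr R2 I2 = dr R4 I1"

definition d1_ro :: "(reaction \<Rightarrow> species \<Rightarrow> real) \<Rightarrow> real" where "d1_ro dr = dr R1 L1"
definition d2_ro :: "(reaction \<Rightarrow> species \<Rightarrow> real) \<Rightarrow> real" where "d2_ro dr = dr R1 L2"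
definition dI_re :: "(reaction \<Rightarrow> species \<Rightarrow> real) \<Rightarrow> real" where "dI_re dr = dr R2 I2"

definition jac :: "real \<Rightarrow> (reaction \<Rightarrow> species \<Rightarrow> real) \<Rightarrow> species \<Rightarrow> species \<Rightarrow> real" where
  "jac eta dr m n = (\<Sum>j\<in>UNIV. stoich eta m j * dr j n)"

text \<open>Tangent space of the invariant set fixing the conserved quantities
  [L1]+[I1] and [L2]+[I2].\<close>
definition tangent :: "(species \<Rightarrow> 'a::comm_ring) \<Rightarrow> bool" where
  "tangent v \<longleftrightarrow> v L1 + v I1 = 0 \<and> v L2 + v I2 = 0"

definition restricted_singular :: "(species \<Rightarrow> species \<Rightarrow> real) \<Rightarrow> bool" where
  "restricted_singular J \<longleftrightarrow>
     (\<exists>v::species \<Rightarrow> real. (\<exists>n. v n \<noteq> 0) \<and> tangent v \<and> (\<forall>m. (\<Sum>n\<in>UNIV. J m n * v n) = 0))"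

definition restricted_unstable :: "(species \<Rightarrow> species \<Rightarrow> real) \<Rightarrow> bool" where
  "restricted_unstable J \<longleftrightarrow>
     (\<exists>\<mu>::complex. Re \<mu> > 0 \<and> (\<exists>v::species \<Rightarrow> complex. (\<exists>n. v n \<noteq> 0) \<and> tangent v \<and>
        (\<forall>m. (\<Sum>n\<in>UNIV. complex_of_real (J m n) * v n) = \<mu> * v m)))"

definition capacity_zero_eig_bif :: "real \<Rightarrow> bool" where
  "capacity_zero_eig_bif eta \<longleftrightarrow>
     (\<exists>dr. admissible eta dr \<and> restricted_singular (jac eta dr))"

definition setdet :: "'a set \<Rightarrow> ('a \<Rightarrow> 'a \<Rightarrow> real) \<Rightarrow> real" where
  "setdet K M = (\<Sum>p\<in>{p. p permutes K}. of_int (sign p) * (\<Prod>i\<in>K. M i (p i)))"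

definition CS_triple :: "real \<Rightarrow> species set \<Rightarrow> (species \<Rightarrow> reaction) \<Rightarrow> bool" where
  "CS_triple eta K J \<longleftrightarrow> K \<noteq> {} \<and> inj_on J K \<and> (\<forall>X\<in>K. reactant eta X (J X))"

definition CS_matrix :: "real \<Rightarrow> (species \<Rightarrow> reaction) \<Rightarrow> species \<Rightarrow> species \<Rightarrow> real" where
  "CS_matrix eta J m l = stoich eta m (J l)"

definition unstable_positive :: "species set \<Rightarrow> (species \<Rightarrow> species \<Rightarrow> real) \<Rightarrow> bool" where
  "unstable_positive K M \<longleftrightarrow>
     sgn (setdet K M) = (-1) ^ (card K - 1) \<and>
     (\<forall>K'. K' \<subset> K \<and> K' \<noteq> {} \<longrightarrow> sgn (setdet K' M) \<noteq> (-1) ^ (card K' - 1))"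

definition non_autocatalytic :: "species set \<Rightarrow> (species \<Rightarrow> species \<Rightarrow> real) \<Rightarrow> bool" where
  "non_autocatalytic K M \<longleftrightarrow> (\<exists>i\<in>K. \<exists>j\<in>K. i \<noteq> j \<and> M i j < 0)"

definition nonaut_motifs :: "real \<Rightarrow> (species set \<times> reaction set) set" where
  "nonaut_motifs eta = {(K, J ` K) | K J. CS_triple eta K J \<and>
       unstable_positive K (CS_matrix eta J) \<and> non_autocatalytic K (CS_matrix eta J)}"

end

theory Submission
  imports Defs
begin

(* On the tangent space of the conservation laws a perturbation is determined by its components
   x = [L1] and y = [L2], on which the restricted Jacobian acts by the symmetric matrix
   [[-(d2 + dI), -d1], [-d1, -(d2 + dI)]] (d1, d2 = partial_1 r_o, partial_2 r_o and dI = partial_I r_e).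
   Its eigenvectors (1, 1) and (1, -1) have eigenvalues -(d1 + d2 + dI) < 0 and d1 - d2 - dI; the
   second one vanishes exactly under the bifurcation condition and is the only one that can make
   the steady state unstable.
   A CS-matrix of size at least 3 uses some reaction together with its reverse (1 with 2, or 3
   with 4), so it has two opposite columns and vanishing determinant; a 1x1 CS-matrix is a
   nonpositive entry; the 2x2 case is a finite check leaving only the motif ({L1, L2}, {1, 3}). *)

lemma setdet_singleton: "setdet {a} M = M a a"
  unfolding setdet_def by simp

lemma setdet_doubleton:
  assumes "a \<noteq> b"
  shows "setdet {a, b} M = M a a * M b b - M a b * M b a"
proof -
  have "setdet {a, b} M = (\<Sum>c\<in>{a, b}. \<Sum>q\<in>{p. p permutes {b}}.
     of_int (sign (transpose a c \<circ> q)) * (\<Prod>i\<in>{a, b}. M i ((transpose a c \<circ> q) i)))"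
    unfolding setdet_def by (rule sum_over_permutations_insert) (use assms in auto)
  also have "\<dots> = M a a * M b b - M a b * M b a"
    using assms by (simp add: sign_swap_id transpose_def)
  finally show ?thesis .
qed

lemma setdet_swap_columns:
  assumes "finite K" "a \<in> K" "b \<in> K" "a \<noteq> b"
  shows "setdet K (\<lambda>i j. M i (transpose a b j)) = - setdet K M"
proof -
  let ?t = "transpose a b"
  have t: "?t permutes K" using assms by (simp add: permutes_swap_id)
  have t_comp: "?t \<circ> p permutes K" if "p permutes K" for p
    using that t by (rule permutes_compose)
  have t_t: "?t \<circ> (?t \<circ> p) = p" for p
    by (simp add: fun_eq_iff)
  have sign_t: "sign (?t \<circ> p) = - sign p" if "p permutes K" for p
    using assms t that by (simp add: sign_compose permutes_imp_permutation sign_swap_id)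
  have "setdet K (\<lambda>i j. M i (?t j))
      = (\<Sum>p\<in>{p. p permutes K}. of_int (sign p) * (\<Prod>i\<in>K. M i ((?t \<circ> p) i)))"
    unfolding setdet_def by simp
  also have "\<dots> = (\<Sum>q\<in>{p. p permutes K}. of_int (sign (?t \<circ> q)) * (\<Prod>i\<in>K. M i (q i)))"
    by (rule sum.reindex_bij_witness[where i="\<lambda>q. ?t \<circ> q" and j="\<lambda>p. ?t \<circ> p"])
       (simp_all add: t_comp t_t)
  also have "\<dots> = - setdet K M"
    unfolding setdet_def by (simp add: sign_t sum_negf)
  finally show ?thesis .
qed

lemma setdet_scale_columns:
  assumes "finite K"
  shows "setdet K (\<lambda>i j. M i j * c j) = (\<Prod>j\<in>K. c j) * setdet K M"
proof -
  have "(\<Prod>i\<in>K. M i (p i) * c (p i)) = (\<Prod>j\<in>K. c j) * (\<Prod>i\<in>K. M i (p i))"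
    if "p permutes K" for p
    using prod.permute[OF that, of c] by (simp add: prod.distrib comp_def mult.commute)
  then have "setdet K (\<lambda>i j. M i j * c j)
      = (\<Sum>p\<in>{p. p permutes K}. (\<Prod>j\<in>K. c j) * (of_int (sign p) * (\<Prod>i\<in>K. M i (p i))))"
    unfolding setdet_def by (intro sum.cong) (simp_all add: mult.left_commute)
  then show ?thesis
    unfolding setdet_def by (simp add: sum_distrib_left)
qed

lemma setdet_eq_0_if_opposite_columns:
  assumes "finite K" "a \<in> K" "b \<in> K" "a \<noteq> b" and opposite: "\<And>i. M i a = - M i b"
  shows "setdet K M = 0"
proof -
  (* swapping the two columns negates the determinant but amounts to negating both of them *)
  define e where "e j = (if j = a \<or> j = b then -1 else 1 :: real)" for j
  have "(\<Prod>j\<in>K. e j) = (\<Prod>j\<in>{a, b}. e j)"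
    using assms by (intro prod.mono_neutral_right) (auto simp: e_def)
  also have "\<dots> = 1"
    using assms by (simp add: e_def)
  finally have e_prod: "(\<Prod>j\<in>K. e j) = 1" .
  have "M i (transpose a b j) = M i j * e j" for i j
    using opposite[of i] \<open>a \<noteq> b\<close> by (cases "j = a \<or> j = b") (auto simp: e_def)
  then have "(\<lambda>i j. M i (transpose a b j)) = (\<lambda>i j. M i j * e j)"
    by blast
  then have "- setdet K M = setdet K M"
    using setdet_swap_columns[OF assms(1-4), of M] setdet_scale_columns[OF assms(1), of M e]
    by (simp only: e_prod mult_1)
  then show ?thesis
    by simp
qed

lemma tangent_nonzero_imp_L1_or_L2:
  fixes v :: "species \<Rightarrow> 'a::comm_ring"
  assumes "tangent v" "\<exists>n. v n \<noteq> 0"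
  shows "v L1 \<noteq> 0 \<or> v L2 \<noteq> 0"
  using assms unfolding tangent_def by (metis add.left_neutral species.exhaust)

lemma symmetric_2x2_eigenvalue:
  fixes \<mu> p q x y :: "'a::field_char_0"
  assumes "\<mu> * x = p * x + q * y" "\<mu> * y = q * x + p * y" "x \<noteq> 0 \<or> y \<noteq> 0"
  shows "\<mu> = p + q \<or> \<mu> = p - q"
proof -
  have "(\<mu> - (p + q)) * (x + y) = (\<mu> * x - p * x - q * y) + (\<mu> * y - q * x - p * y)"
    by (simp add: algebra_simps)
  then have sum: "(\<mu> - (p + q)) * (x + y) = 0"
    using assms(1,2) by simp
  have "(\<mu> - (p - q)) * (x - y) = (\<mu> * x - p * x - q * y) - (\<mu> * y - q * x - p * y)"
    by (simp add: algebra_simps)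
  then have diff: "(\<mu> - (p - q)) * (x - y) = 0"
    using assms(1,2) by simp
  have "2 * x = (x + y) + (x - y)"
    by simp
  then have "x + y \<noteq> 0 \<or> x - y \<noteq> 0"
    using assms(3) by auto
  with sum diff show ?thesis
    by auto
qed

definition symmetric_derivatives :: "real \<Rightarrow> real \<Rightarrow> real \<Rightarrow> reaction \<Rightarrow> species \<Rightarrow> real" where
  "symmetric_derivatives a b c j m = (case (j, m) of
      (R1, L1) \<Rightarrow> a | (R1, L2) \<Rightarrow> b | (R3, L2) \<Rightarrow> a | (R3, L1) \<Rightarrow> b
    | (R2, I2) \<Rightarrow> c | (R4, I1) \<Rightarrow> c | _ \<Rightarrow> 0)"

lemma partials_symmetric_derivatives [simp]:
  "d1_ro (symmetric_derivatives a b c) = a"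
  "d2_ro (symmetric_derivatives a b c) = b"
  "dI_re (symmetric_derivatives a b c) = c"
  by (simp_all add: d1_ro_def d2_ro_def dI_re_def symmetric_derivatives_def)

lemma reactant_iff:
  assumes "eta > 0"
  shows "reactant eta m j \<longleftrightarrow>
    (j = R1 \<or> j = R3) \<and> (m = L1 \<or> m = L2) \<or> j = R2 \<and> m = I2 \<or> j = R4 \<and> m = I1"
  using assms by (cases j; cases m) (simp_all add: reactant_def)

lemma admissible_iff_symmetric_derivatives:
  assumes "eta > 0"
  shows "admissible eta dr \<longleftrightarrow>
    (\<exists>a b c. 0 < a \<and> 0 < b \<and> 0 < c \<and> dr = symmetric_derivatives a b c)"
proof
  assume adm: "admissible eta dr"
  have "dr = symmetric_derivatives (dr R1 L1) (dr R1 L2) (dr R2 I2)"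
  proof (intro ext)
    fix j m
    show "dr j m = symmetric_derivatives (dr R1 L1) (dr R1 L2) (dr R2 I2) j m"
      using adm by (cases j; cases m)
        (auto simp: admissible_def reactant_iff[OF assms] symmetric_derivatives_def)
  qed
  moreover have "0 < dr R1 L1" "0 < dr R1 L2" "0 < dr R2 I2"
    using adm by (auto simp: admissible_def reactant_iff[OF assms])
  ultimately show "\<exists>a b c. 0 < a \<and> 0 < b \<and> 0 < c \<and> dr = symmetric_derivatives a b c"
    by blast
next
  assume "\<exists>a b c. 0 < a \<and> 0 < b \<and> 0 < c \<and> dr = symmetric_derivatives a b c"
  then show "admissible eta dr"
    by (auto simp: admissible_def reactant_iff[OF assms] symmetric_derivatives_def
        split: reaction.split species.split)
qed

lemma sum_species: "(\<Sum>n\<in>UNIV. f n) = f L1 + f I1 + f L2 + f I2"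
  by (simp add: species_UNIV add.assoc)

lemma jac_symmetric_derivatives_tangent:
  fixes eta a b c :: real and v :: "species \<Rightarrow> 'a::real_field"
  assumes "tangent v"
  defines "w \<equiv> \<lambda>m. \<Sum>n\<in>UNIV. of_real (jac eta (symmetric_derivatives a b c) m n) * v n"
  shows "w L1 = - of_real (b + c) * v L1 + - of_real a * v L2"
    and "w L2 = - of_real a * v L1 + - of_real (b + c) * v L2"
    and "w I1 = - w L1"
    and "w I2 = - w L2"
  using assms(1) unfolding tangent_def add_eq_0_iff
  by (simp_all add: w_def sum_species jac_def reaction_UNIV stoich_def
      symmetric_derivatives_def algebra_simps)

lemma restricted_singular_symmetric_iff:
  assumes "0 < a" "0 < b" "0 < c"
  shows "restricted_singular (jac eta (symmetric_derivatives a b c)) \<longleftrightarrow> b + c = a"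
proof
  assume "restricted_singular (jac eta (symmetric_derivatives a b c))"
  then obtain v :: "species \<Rightarrow> real" where nonzero: "\<exists>n. v n \<noteq> 0" and "tangent v"
    and kernel: "\<And>m. (\<Sum>n\<in>UNIV. jac eta (symmetric_derivatives a b c) m n * v n) = 0"
    unfolding restricted_singular_def by blast
  note Jv = jac_symmetric_derivatives_tangent[OF \<open>tangent v\<close>, of eta a b c]
  have "0 * v L1 = - (b + c) * v L1 + - a * v L2" "0 * v L2 = - a * v L1 + - (b + c) * v L2"
    using Jv(1,2) kernel[of L1] kernel[of L2] by simp_all
  then have "0 = - (b + c) + - a \<or> 0 = - (b + c) - - a"
    using tangent_nonzero_imp_L1_or_L2[OF \<open>tangent v\<close> nonzero] by (rule symmetric_2x2_eigenvalue)
  then show "b + c = a"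
    using assms by auto
next
  assume "b + c = a"
  define v :: "species \<Rightarrow> real" where "v n = (case n of L1 \<Rightarrow> 1 | I1 \<Rightarrow> -1 | L2 \<Rightarrow> -1 | I2 \<Rightarrow> 1)" for n
  have "tangent v"
    by (simp add: tangent_def v_def)
  note Jv = jac_symmetric_derivatives_tangent[OF this, of eta a b c]
  have "(\<Sum>n\<in>UNIV. jac eta (symmetric_derivatives a b c) m n * v n) = 0" for m
    using Jv \<open>b + c = a\<close> by (cases m) (simp_all add: v_def)
  moreover have "v L1 \<noteq> 0"
    by (simp add: v_def)
  ultimately show "restricted_singular (jac eta (symmetric_derivatives a b c))"
    unfolding restricted_singular_def using \<open>tangent v\<close> by blast
qed

lemma restricted_unstable_symmetric_imp_less:
  assumes "0 < a" "0 < b" "0 < c"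
    and "restricted_unstable (jac eta (symmetric_derivatives a b c))"
  shows "b + c < a"
proof -
  obtain \<mu> :: complex and v where "0 < Re \<mu>" and nonzero: "\<exists>n. v n \<noteq> 0" and "tangent v"
    and eigen: "\<And>m. (\<Sum>n\<in>UNIV. of_real (jac eta (symmetric_derivatives a b c) m n) * v n) = \<mu> * v m"
    using assms(4) unfolding restricted_unstable_def by blast
  note Jv = jac_symmetric_derivatives_tangent[OF \<open>tangent v\<close>, of eta a b c]
  have "\<mu> * v L1 = - of_real (b + c) * v L1 + - of_real a * v L2"
    "\<mu> * v L2 = - of_real a * v L1 + - of_real (b + c) * v L2"
    using Jv(1,2) eigen[of L1] eigen[of L2] by simp_all
  then have "\<mu> = - of_real (b + c) + - of_real a \<or> \<mu> = - of_real (b + c) - - of_real a"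
    using tangent_nonzero_imp_L1_or_L2[OF \<open>tangent v\<close> nonzero] by (rule symmetric_2x2_eigenvalue)
  then show "b + c < a"
    using \<open>0 < Re \<mu>\<close> assms(1-3) by auto
qed

lemma stoich_le_0_if_reactant:
  assumes "eta > 0" "reactant eta m j"
  shows "stoich eta m j \<le> 0"
  using assms by (cases j; cases m) (simp_all add: reactant_iff stoich_def)

lemma stoich_reverse_reactions:
  "stoich eta m R2 = - stoich eta m R1"
  "stoich eta m R4 = - stoich eta m R3"
  by (cases m; simp add: stoich_def)+

lemma reverse_pair_mem_if_card_ge_3:
  assumes "3 \<le> card (A :: reaction set)"
  shows "R1 \<in> A \<and> R2 \<in> A \<or> R3 \<in> A \<and> R4 \<in> A"
proof (rule ccontr)
  assume "\<not> ?thesis"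
  then obtain p q where "p \<notin> A" "q \<notin> A" "p \<noteq> q"
    by (metis reaction.distinct)
  then have "card A \<le> card (UNIV - {p, q})"
    by (intro card_mono) auto
  also have "\<dots> = card (UNIV :: reaction set) - 2"
    using \<open>p \<noteq> q\<close> by (simp add: card_Diff_subset)
  also have "\<dots> = 2"
    by (simp add: reaction_UNIV)
  finally show False
    using assms by simp
qed

lemma setdet_CS_matrix_eq_0_if_card_ge_3:
  assumes "inj_on J K" "3 \<le> card K"
  shows "setdet K (CS_matrix eta J) = 0"
proof -
  have "3 \<le> card (J ` K)"
    using assms by (simp add: card_image)
  then obtain r r' where "r \<in> J ` K" "r' \<in> J ` K" "r \<noteq> r'"
    and opposite: "\<And>m. stoich eta m r = - stoich eta m r'"
    using reverse_pair_mem_if_card_ge_3 stoich_reverse_reactions by (metis reaction.distinct)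
  then obtain a b where "a \<in> K" "b \<in> K" "a \<noteq> b" "J a = r" "J b = r'"
    by blast
  moreover have "CS_matrix eta J m a = - CS_matrix eta J m b" for m
    using opposite \<open>J a = r\<close> \<open>J b = r'\<close> by (simp add: CS_matrix_def)
  ultimately show ?thesis
    by (intro setdet_eq_0_if_opposite_columns) simp_all
qed

lemma unstable_positive_singleton_iff: "unstable_positive {a} M \<longleftrightarrow> 0 < M a a"
  by (auto simp: unstable_positive_def setdet_singleton sgn_1_pos subset_singleton_iff)

lemma unstable_positive_doubleton_iff:
  assumes "a \<noteq> b"
  shows "unstable_positive {a, b} M \<longleftrightarrow>
    M a a * M b b - M a b * M b a < 0 \<and> M a a \<le> 0 \<and> M b b \<le> 0"
proof -
  have "K' \<subset> {a, b} \<and> K' \<noteq> {} \<longleftrightarrow> K' = {a} \<or> K' = {b}" for K'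
    using assms by blast
  then show ?thesis
    using assms by (auto simp: unstable_positive_def setdet_doubleton setdet_singleton
        sgn_1_pos sgn_if)
qed

lemma unstable_positive_CS_doubleton:
  assumes "eta > 0" "a \<noteq> b" "reactant eta a (J a)" "reactant eta b (J b)" "J a \<noteq> J b"
    and "unstable_positive {a, b} (CS_matrix eta J)"
  shows "{a, b} = {L1, L2} \<and> {J a, J b} = {R1, R3}"
proof -
  have "stoich eta a (J a) * stoich eta b (J b) - stoich eta a (J b) * stoich eta b (J a) < 0"
    using assms(6) unfolding unstable_positive_doubleton_iff[OF assms(2)] CS_matrix_def by blast
  then show ?thesis
    using assms(1-5)
    by (cases a; cases b; cases "J a"; cases "J b")
      (simp_all add: reactant_iff stoich_def insert_commute)
qed

lemma unstable_positive_CS_triple_eq: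
  assumes "eta > 0" "CS_triple eta K J" "unstable_positive K (CS_matrix eta J)"
  shows "K = {L1, L2} \<and> J ` K = {R1, R3}"
proof -
  have "K \<noteq> {}" and "inj_on J K" and reactant: "\<And>X. X \<in> K \<Longrightarrow> reactant eta X (J X)"
    using assms(2) unfolding CS_triple_def by auto
  then have "1 \<le> card K"
    by (simp add: Suc_le_eq card_gt_0_iff)
  then consider "card K = 1" | "card K = 2" | "3 \<le> card K"
    by linarith
  then show ?thesis
  proof cases
    case 1
    then obtain a where K: "K = {a}"
      by (auto simp: card_Suc_eq)
    have "stoich eta a (J a) \<le> 0"
      using assms(1) reactant K by (simp add: stoich_le_0_if_reactant)
    with assms(3) show ?thesis
      by (simp add: K unstable_positive_singleton_iff CS_matrix_def)
  next
    case 2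
    then obtain a b where K: "K = {a, b}" and "a \<noteq> b"
      by (auto simp: card_2_iff)
    have "J a \<noteq> J b"
      using \<open>inj_on J K\<close> K \<open>a \<noteq> b\<close> by (auto simp: inj_on_def)
    then have "{a, b} = {L1, L2} \<and> {J a, J b} = {R1, R3}"
      using assms(1,3) reactant \<open>a \<noteq> b\<close> unfolding K
      by (intro unstable_positive_CS_doubleton) simp_all
    then show ?thesis
      using K by (metis image_empty image_insert)
  next
    case 3
    then have "setdet K (CS_matrix eta J) = 0"
      using \<open>inj_on J K\<close> by (rule setdet_CS_matrix_eq_0_if_card_ge_3[rotated])
    with assms(3) show ?thesis
      by (simp add: unstable_positive_def)
  qed
qed

lemma nonaut_motifs_eq:
  assumes "eta > 0"
  shows "nonaut_motifs eta = {({L1, L2}, {R1, R3})}"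
proof
  show "nonaut_motifs eta \<subseteq> {({L1, L2}, {R1, R3})}"
    using unstable_positive_CS_triple_eq[OF assms] unfolding nonaut_motifs_def by fastforce
next
  define J where "J X = (if X = L1 then R1 else R3)" for X
  have "CS_triple eta {L1, L2} J"
    using assms by (simp add: CS_triple_def J_def reactant_iff)
  moreover have "unstable_positive {L1, L2} (CS_matrix eta J)"
    by (simp add: unstable_positive_doubleton_iff CS_matrix_def J_def stoich_def)
  moreover have "non_autocatalytic {L1, L2} (CS_matrix eta J)"
    by (force simp: non_autocatalytic_def CS_matrix_def J_def stoich_def)
  moreover have "J ` {L1, L2} = {R1, R3}"
    by (auto simp: J_def)
  ultimately show "{({L1, L2}, {R1, R3})} \<subseteq> nonaut_motifs eta"
    unfolding nonaut_motifs_def by blast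
qed

theorem proposition4p4:
  fixes eta :: real
  assumes "eta > 0"
  shows "capacity_zero_eig_bif eta
    \<and> (\<forall>dr. admissible eta dr \<longrightarrow>
          (restricted_singular (jac eta dr) \<longleftrightarrow> d2_ro dr + dI_re dr = d1_ro dr))
    \<and> (\<forall>dr. admissible eta dr \<longrightarrow> restricted_unstable (jac eta dr) \<longrightarrow>
          d2_ro dr + dI_re dr < d1_ro dr)
    \<and> nonaut_motifs eta = {({L1, L2}, {R1, R3})}"
proof -
  note admissible = admissible_iff_symmetric_derivatives[OF assms]
  have singular: "restricted_singular (jac eta dr) \<longleftrightarrow> d2_ro dr + dI_re dr = d1_ro dr"
    if "admissible eta dr" for dr
    using that restricted_singular_symmetric_iff by (auto simp: admissible)
  have unstable: "d2_ro dr + dI_re dr < d1_ro dr"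
    if "admissible eta dr" "restricted_unstable (jac eta dr)" for dr
    using that restricted_unstable_symmetric_imp_less by (auto simp: admissible)
  have "admissible eta (symmetric_derivatives 2 1 1)"
    unfolding admissible by (intro exI[of _ 2] exI[of _ 1]) simp
  then have "capacity_zero_eig_bif eta"
    unfolding capacity_zero_eig_bif_def using singular by fastforce
  then show ?thesis
    using singular unstable nonaut_motifs_eq[OF assms] by blast
qed

end
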